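(* Let $B$ be a metric space and $f:B\to B$ a continuous map such that $(B,f)$ is minimal. Then there exists an irrational rotation $g$ of the circle $\mathbb S^1$ such that the direct product system $(B\times\mathbb S^1,f\times g)$ is minimal.
   Context: A dynamical system $(X,f)$ with $f$ continuous is minimal if the forward orbit $\{x,f(x),f^2(x),\dots\}$ of every point $x\in X$ is dense in $X$. $(f\times g)(x,s)=(f(x),g(s))$. *)

theory Defs
  imports "HOL-Analysis.Analysis"
begin

definition forward_orbit :: "('a \<Rightarrow> 'a) \<Rightarrow> 'a \<Rightarrow> 'a set" where
  "forward_orbit f x = {(f ^^ n) x | n. True}"

definition minimal_system :: "'a::topological_space set \<Rightarrow> ('a \<Rightarrow> 'a) \<Rightarrow> bool" where
  "minimal_system X f \<longleftrightarrow> continuous_on X f \<and> f ` X \<subseteq> X \<and>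
     (\<forall>x\<in>X. X \<subseteq> closure (forward_orbit f x))"

text \<open>The circle S^1 as the unit circle in the complex plane; the rotation by
  angle 2 pi a is multiplication by cis (2 pi a); it is irrational iff a is irrational.\<close>
definition circle_rotation :: "real \<Rightarrow> complex \<Rightarrow> complex" where
  "circle_rotation a z = cis (2 * pi * a) * z"

end

theory Submission
  imports Defs
begin

text \<open>Fix x0 \<in> B and write R_a for the rotation by 2 pi a. The orbit of (x0, 1) under
  f \<times> R_a is dense as soon as a lies in countably many sets, indexed by points of a countable
  dense subset of B \<times> S^1 and radii; each of them is open, and dense because x0 is recurrent.
  Baire's theorem provides an irrational a in all of them. Minimality then spreads to every
  point: rotations of the circle factor commute with f \<times> R_a, so every (x0, w) has a dense
  orbit; by compactness of S^1 the orbit closure of any (x, z) contains some (x0, w), and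
  orbit closures are invariant, so it contains all of B \<times> S^1.\<close>

lemma funpow_map_prod:
  fixes f :: "'a \<Rightarrow> 'a" and g :: "'b \<Rightarrow> 'b"
  shows "map_prod f g ^^ n = map_prod (f ^^ n) (g ^^ n)"
  by (induction n) (simp_all add: prod.map_id0 map_prod.comp, simp add: comp_def)

lemma funpow_circle_rotation: "circle_rotation a ^^ n = circle_rotation (real n * a)"
proof (induction n)
  case (Suc n)
  then show ?case
    by (simp add: fun_eq_iff circle_rotation_def cis_mult algebra_simps)
qed (simp add: fun_eq_iff circle_rotation_def)

lemma funpow_map_prod_circle_rotation:
  fixes f :: "'a \<Rightarrow> 'a"
  shows "(map_prod f (circle_rotation a) ^^ n) (x, z) = ((f ^^ n) x, cis (2 * pi * real n * a) * z)"
  unfolding funpow_map_prod funpow_circle_rotation by (simp add: circle_rotation_def mult.assoc)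

lemma forward_orbit_subset:
  assumes "F ` X \<subseteq> X" "x \<in> X"
  shows "forward_orbit F x \<subseteq> X"
proof -
  have "(F ^^ n) x \<in> X" for n
    by (induction n) (use assms in auto)
  then show ?thesis
    by (auto simp: forward_orbit_def)
qed

lemma forward_orbit_commute:
  assumes "F \<circ> h = h \<circ> F"
  shows "forward_orbit F (h p) = h ` forward_orbit F p"
proof -
  have "(F ^^ n) (h x) = h ((F ^^ n) x)" for n x
    using assms by (induction n) (simp_all add: fun_eq_iff)
  then show ?thesis
    by (auto simp: forward_orbit_def)
qed

lemma forward_orbit_map_prod_fst:
  "fst ` forward_orbit (map_prod f g) p = forward_orbit f (fst p)"
  by (force simp: forward_orbit_def funpow_map_prod)

lemma image_forward_orbit_subset: "F ` forward_orbit F p \<subseteq> forward_orbit F p"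
proof
  fix q
  assume "q \<in> F ` forward_orbit F p"
  then obtain k where "q = F ((F ^^ k) p)"
    by (auto simp: forward_orbit_def)
  then have "q = (F ^^ Suc k) p"
    by simp
  then show "q \<in> forward_orbit F p"
    unfolding forward_orbit_def by blast
qed

lemma closure_forward_orbit_invariant:
  fixes F :: "'a::first_countable_topology \<Rightarrow> 'a"
  assumes "continuous_on X F" "F ` X \<subseteq> X" "p \<in> X" "y \<in> X" "y \<in> closure (forward_orbit F p)"
  shows "F y \<in> closure (forward_orbit F p)"
proof -
  obtain s where s: "\<forall>n. s n \<in> forward_orbit F p" "s \<longlonglongrightarrow> y"
    using assms(5) unfolding closure_sequential by blast
  have "\<forall>n. s n \<in> X"
    using s(1) forward_orbit_subset[OF assms(2,3)] by blast
  then have "(\<lambda>n. F (s n)) \<longlonglongrightarrow> F y"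
    by (intro continuous_on_tendsto_compose[OF assms(1) s(2) assms(4)]) (simp add: always_eventually)
  moreover have "\<forall>n. F (s n) \<in> forward_orbit F p"
    using s(1) image_forward_orbit_subset[of F p] by blast
  ultimately show ?thesis
    unfolding closure_sequential by (intro exI[of _ "\<lambda>n. F (s n)"]) blast
qed

lemma forward_orbit_subset_closure_forward_orbit:
  fixes F :: "'a::first_countable_topology \<Rightarrow> 'a"
  assumes "continuous_on X F" "F ` X \<subseteq> X" "p \<in> X" "q \<in> X" "q \<in> closure (forward_orbit F p)"
  shows "forward_orbit F q \<subseteq> closure (forward_orbit F p)"
proof -
  have "(F ^^ n) q \<in> X \<and> (F ^^ n) q \<in> closure (forward_orbit F p)" for n
  proof (induction n)
    case (Suc n)
    then have "F ((F ^^ n) q) \<in> X" "F ((F ^^ n) q) \<in> closure (forward_orbit F p)"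
      using assms(2) closure_forward_orbit_invariant[OF assms(1-3)] by auto
    then show ?case
      by simp
  qed (use assms in simp)
  then show ?thesis
    by (auto simp: forward_orbit_def)
qed

lemma minimal_system_recurrent:
  assumes "minimal_system B f" "x \<in> B" "y \<in> B" "e > 0"
  shows "\<exists>n\<ge>M. dist ((f ^^ n) x) y < e"
proof -
  have "(f ^^ M) x \<in> B"
    using assms(1,2) forward_orbit_subset[of f B x] by (auto simp: minimal_system_def forward_orbit_def)
  then have "y \<in> closure (forward_orbit f ((f ^^ M) x))"
    using assms(1,3) by (auto simp: minimal_system_def)
  then obtain x' where "x' \<in> forward_orbit f ((f ^^ M) x)" "dist x' y < e"
    using assms(4) closure_approachable by blast
  then obtain k where "dist ((f ^^ k) ((f ^^ M) x)) y < e"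
    by (auto simp: forward_orbit_def)
  then show ?thesis
    by (intro exI[of _ "k + M"]) (simp add: funpow_add)
qed

lemma closure_fst_image_compact_fibre:
  fixes A :: "('a::metric_space \<times> 'b::metric_space) set"
  assumes "compact Y" "snd ` A \<subseteq> Y" "x \<in> closure (fst ` A)"
  shows "\<exists>y\<in>Y. (x, y) \<in> closure A"
proof -
  obtain s where s: "\<And>n. s n \<in> fst ` A" "s \<longlonglongrightarrow> x"
    using assms(3) closure_sequential by metis
  have "\<forall>n. \<exists>q. q \<in> A \<and> fst q = s n"
    using s(1) by force
  then obtain q where q: "\<And>n. q n \<in> A" "\<And>n. fst (q n) = s n"
    by metis
  have "\<forall>n. (snd \<circ> q) n \<in> Y"
    using q(1) assms(2) by auto
  then obtain y r where y: "y \<in> Y" "strict_mono r" "(snd \<circ> q \<circ> r) \<longlonglongrightarrow> y"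
    by (rule seq_compactE[OF compact_imp_seq_compact[OF assms(1)]])
  have "(s \<circ> r) \<longlonglongrightarrow> x"
    using s(2) y(2) by (rule LIMSEQ_subseq_LIMSEQ)
  then have "(fst \<circ> q \<circ> r) \<longlonglongrightarrow> x"
    by (simp add: comp_def q(2))
  then have "(\<lambda>n. ((fst \<circ> q \<circ> r) n, (snd \<circ> q \<circ> r) n)) \<longlonglongrightarrow> (x, y)"
    using y(3) by (rule tendsto_Pair)
  then have "(q \<circ> r) \<longlonglongrightarrow> (x, y)"
    by (simp add: comp_def)
  then show ?thesis
    using q(1) y(1) unfolding closure_sequential by (intro bexI[of _ y] exI[of _ "q \<circ> r"]) auto
qed

lemma dist_Pair_Pair_le_add: "dist (a, b) (c, d) \<le> dist a c + dist b d"
  unfolding dist_Pair_Pair by (rule sqrt_sum_squares_le_sum) simp_all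

lemma unit_complex_eq_cis: "norm (v::complex) = 1 \<Longrightarrow> \<exists>s. v = cis (2 * pi * s)"
proof -
  assume "norm v = 1"
  then have "v \<noteq> 0"
    by auto
  then have "v = cis (Arg v)"
    using cis_Arg[of v] \<open>norm v = 1\<close> by (simp add: sgn_div_norm)
  then show ?thesis
    by (intro exI[of _ "Arg v / (2 * pi)"]) simp
qed

lemma sphere_subset_closure_cis_Rats:
  "sphere (0::complex) 1 \<subseteq> closure ((\<lambda>t. cis (2 * pi * t)) ` \<rat>)"
proof
  fix v :: complex assume "v \<in> sphere 0 1"
  then obtain s where "v = cis (2 * pi * s)"
    using unit_complex_eq_cis by auto
  moreover have "continuous_on UNIV (\<lambda>t. cis (2 * pi * t))"
    unfolding cis_conv_exp by (intro continuous_intros)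
  then have "(\<lambda>t. cis (2 * pi * t)) ` closure \<rat> \<subseteq> closure ((\<lambda>t. cis (2 * pi * t)) ` \<rat>)"
    by (intro image_closure_subset closure_subset closed_closure) (rule continuous_on_subset, auto)
  ultimately show "v \<in> closure ((\<lambda>t. cis (2 * pi * t)) ` \<rat>)"
    by (auto simp: Rats_closure_real)
qed

lemma Baire_real_avoiding_countable:
  fixes \<G> :: "real set set"
  assumes "countable \<G>" "\<And>T. T \<in> \<G> \<Longrightarrow> open T \<and> closure T = UNIV" "countable Q"
  shows "\<exists>a. a \<notin> Q \<and> a \<in> \<Inter>\<G>"
proof -
  have "UNIV \<subseteq> closure (\<Inter>(\<G> \<union> (\<lambda>q. - {q}) ` Q))"
    by (rule Baire) (use assms in \<open>auto simp: closure_interior\<close>)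
  then obtain a where "a \<in> \<Inter>(\<G> \<union> (\<lambda>q. - {q}) ` Q)"
    by (metis UNIV_I closure_empty subset_iff ex_in_conv)
  then show ?thesis
    by blast
qed

lemma cis_multiple_eq_near:
  assumes "n > 0"
  shows "\<exists>a. dist a a0 < 1 / real n \<and> cis (2 * pi * real n * a) = cis (2 * pi * t)"
proof -
  define k where "k = \<lceil>real n * a0 - t\<rceil>"
  define a where "a = (t + of_int k) / real n"
  have "a - a0 = (t + of_int k - real n * a0) / real n"
    using assms by (simp add: a_def field_simps)
  moreover have "0 \<le> t + of_int k - real n * a0" "t + of_int k - real n * a0 < 1"
    unfolding k_def by linarith+
  ultimately have "dist a a0 < 1 / real n"
    using assms by (simp add: dist_real_def divide_strict_right_mono)
  moreover have "2 * pi * real n * a = 2 * pi * t + 2 * pi * of_int k"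
    using assms by (simp add: a_def field_simps)
  then have "cis (2 * pi * real n * a) = cis (2 * pi * t)"
    by (simp add: cis_mult[symmetric])
  ultimately show ?thesis
    by blast
qed

definition joint_return_set ::
    "('a::metric_space \<Rightarrow> 'a) \<Rightarrow> 'a \<Rightarrow> 'a \<Rightarrow> complex \<Rightarrow> real \<Rightarrow> real set" where
  "joint_return_set f x y v e =
     {a. \<exists>n. dist ((f ^^ n) x) y < e \<and> dist (cis (2 * pi * real n * a)) v < e}"

lemma open_joint_return_set: "open (joint_return_set f x y v e)"
proof -
  have "joint_return_set f x y v e =
      (\<Union>n\<in>{n. dist ((f ^^ n) x) y < e}. {a. dist (cis (2 * pi * real n * a)) v < e})"
    by (auto simp: joint_return_set_def)
  also have "open \<dots>"
    unfolding cis_conv_exp by (intro open_UN ballI open_Collect_less continuous_intros)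
  finally show ?thesis .
qed

text \<open>Density comes from recurrence: there are arbitrarily large n with f^n x close to y,
  and R_a^n hits v for a whole 1/n-net of a's.\<close>
lemma dense_joint_return_set:
  fixes f :: "'a::metric_space \<Rightarrow> 'a"
  assumes "minimal_system B f" "x \<in> B" "y \<in> B" "e > 0" "norm v = 1"
  shows "closure (joint_return_set f x y v e) = UNIV"
proof -
  obtain t where v: "v = cis (2 * pi * t)"
    using unit_complex_eq_cis assms(5) by blast
  have "a0 \<in> closure (joint_return_set f x y v e)" for a0
    unfolding closure_approachable
  proof (intro allI impI)
    fix \<delta> :: real
    assume "\<delta> > 0"
    then obtain N where N: "inverse (real (Suc N)) < \<delta>"
      using reals_Archimedean by blast
    obtain n where n: "n \<ge> Suc N" "dist ((f ^^ n) x) y < e"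
      using minimal_system_recurrent[OF assms(1-4)] by blast
    obtain a where a: "dist a a0 < 1 / real n" "cis (2 * pi * real n * a) = v"
      using cis_multiple_eq_near[of n a0 t] n(1) v by auto
    have "1 / real n \<le> inverse (real (Suc N))"
      using n(1) by (simp add: inverse_eq_divide frac_le)
    then have "dist a a0 < \<delta>"
      using a(1) N by linarith
    moreover have "a \<in> joint_return_set f x y v e"
      using a(2) n(2) assms(4) by (auto simp: joint_return_set_def)
    ultimately show "\<exists>a\<in>joint_return_set f x y v e. dist a a0 < \<delta>"
      by blast
  qed
  then show ?thesis
    by auto
qed

lemma dense_orbit_if_joint_returns:
  fixes f :: "'a::metric_space \<Rightarrow> 'a"
  assumes "minimal_system B f" "x0 \<in> B"
    and returns: "\<And>m r t. t \<in> \<rat> \<Longrightarrow>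
      a \<in> joint_return_set f x0 ((f ^^ m) x0) (cis (2 * pi * t)) (1 / real (Suc r))"
  shows "B \<times> sphere 0 1 \<subseteq> closure (forward_orbit (map_prod f (circle_rotation a)) (x0, 1))"
proof
  fix q :: "'a \<times> complex"
  assume "q \<in> B \<times> sphere 0 1"
  then obtain y u where q: "q = (y, u)" "y \<in> B" "norm u = 1"
    by auto
  show "q \<in> closure (forward_orbit (map_prod f (circle_rotation a)) (x0, 1))"
    unfolding q(1) closure_approachable
  proof (intro allI impI)
    fix \<epsilon> :: real
    assume "\<epsilon> > 0"
    then have "\<epsilon> / 4 > 0"
      by simp
    have "y \<in> closure (forward_orbit f x0)"
      using assms(1,2) q(2) by (auto simp: minimal_system_def)
    then obtain y' where "y' \<in> forward_orbit f x0" "dist y' y < \<epsilon> / 4"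
      using \<open>\<epsilon> / 4 > 0\<close> closure_approachable by blast
    then obtain m where m: "dist ((f ^^ m) x0) y < \<epsilon> / 4"
      by (auto simp: forward_orbit_def)
    have "u \<in> closure ((\<lambda>t. cis (2 * pi * t)) ` \<rat>)"
      using sphere_subset_closure_cis_Rats q(3) by auto
    then obtain u' where "u' \<in> (\<lambda>t. cis (2 * pi * t)) ` \<rat>" "dist u' u < \<epsilon> / 4"
      using \<open>\<epsilon> / 4 > 0\<close> closure_approachable by blast
    then obtain t where t: "t \<in> \<rat>" "dist (cis (2 * pi * t)) u < \<epsilon> / 4"
      by blast
    obtain r where r: "inverse (real (Suc r)) < \<epsilon> / 4"
      using reals_Archimedean \<open>\<epsilon> / 4 > 0\<close> by blast
    obtain n where n: "dist ((f ^^ n) x0) ((f ^^ m) x0) < 1 / real (Suc r)"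
        "dist (cis (2 * pi * real n * a)) (cis (2 * pi * t)) < 1 / real (Suc r)"
      using returns[OF t(1), of m r] by (auto simp: joint_return_set_def)
    have "dist ((f ^^ n) x0) y < \<epsilon> / 2" "dist (cis (2 * pi * real n * a)) u < \<epsilon> / 2"
      using n m t(2) r dist_triangle[of "(f ^^ n) x0" y "(f ^^ m) x0"]
        dist_triangle[of "cis (2 * pi * real n * a)" u "cis (2 * pi * t)"]
      by (simp_all add: inverse_eq_divide)
    moreover have "dist ((f ^^ n) x0, cis (2 * pi * real n * a)) (y, u)
        \<le> dist ((f ^^ n) x0) y + dist (cis (2 * pi * real n * a)) u"
      by (rule dist_Pair_Pair_le_add)
    moreover have "((f ^^ n) x0, cis (2 * pi * real n * a))
        \<in> forward_orbit (map_prod f (circle_rotation a)) (x0, 1)"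
      unfolding forward_orbit_def by (force simp: funpow_map_prod_circle_rotation)
    ultimately show "\<exists>p\<in>forward_orbit (map_prod f (circle_rotation a)) (x0, 1). dist p (y, u) < \<epsilon>"
      by force
  qed
qed

lemma exists_irrational_rotation_with_dense_orbit:
  fixes f :: "'a::metric_space \<Rightarrow> 'a"
  assumes "minimal_system B f" "x0 \<in> B"
  shows "\<exists>a. a \<notin> \<rat> \<and>
    B \<times> sphere 0 1 \<subseteq> closure (forward_orbit (map_prod f (circle_rotation a)) (x0, 1))"
proof -
  have orbit_B: "(f ^^ m) x0 \<in> B" for m
    using assms forward_orbit_subset[of f B x0] by (auto simp: minimal_system_def forward_orbit_def)
  define \<G> where "\<G> = (\<lambda>(m, r, t). joint_return_set f x0 ((f ^^ m) x0) (cis (2 * pi * t))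
      (1 / real (Suc r))) ` (UNIV \<times> UNIV \<times> \<rat>)"
  have "countable \<G>"
    unfolding \<G>_def by (intro countable_image countable_SIGMA countable_rat) auto
  moreover have "open T \<and> closure T = UNIV" if "T \<in> \<G>" for T
    using that open_joint_return_set dense_joint_return_set[OF assms orbit_B]
    unfolding \<G>_def by auto
  ultimately obtain a where a: "a \<notin> \<rat>" "a \<in> \<Inter>\<G>"
    using Baire_real_avoiding_countable countable_rat by blast
  have "a \<in> joint_return_set f x0 ((f ^^ m) x0) (cis (2 * pi * t)) (1 / real (Suc r))"
    if "t \<in> \<rat>" for m r t
  proof -
    have "joint_return_set f x0 ((f ^^ m) x0) (cis (2 * pi * t)) (1 / real (Suc r)) \<in> \<G>"
      unfolding \<G>_def using that by (intro image_eqI[of _ _ "(m, r, t)"]) auto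
    then show ?thesis
      using a(2) by blast
  qed
  then show ?thesis
    using a(1) dense_orbit_if_joint_returns[OF assms] by blast
qed

text \<open>Multiplication by w on the circle factor commutes with f \<times> R_a.\<close>
lemma dense_orbit_rotate:
  fixes f :: "'a::metric_space \<Rightarrow> 'a"
  assumes dense: "B \<times> sphere 0 1 \<subseteq> closure (forward_orbit (map_prod f (circle_rotation a)) (x0, 1))"
    and "norm w = 1"
  shows "B \<times> sphere 0 1 \<subseteq> closure (forward_orbit (map_prod f (circle_rotation a)) (x0, w))"
proof
  define F where "F = map_prod f (circle_rotation a)"
  define h :: "'a \<times> complex \<Rightarrow> 'a \<times> complex" where "h = map_prod id (\<lambda>z. w * z)"
  have "F \<circ> h = h \<circ> F"
    by (auto simp: F_def h_def circle_rotation_def fun_eq_iff algebra_simps)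
  then have orbit_w: "forward_orbit F (x0, w) = h ` forward_orbit F (x0, 1)"
    using forward_orbit_commute[of F h "(x0, 1)"] by (simp add: h_def)
  have "h = (\<lambda>p. (fst p, w * snd p))"
    by (auto simp: h_def fun_eq_iff)
  then have "continuous_on UNIV h"
    by (simp, intro continuous_intros)
  then have closure_h: "h ` closure (forward_orbit F (x0, 1)) \<subseteq> closure (h ` forward_orbit F (x0, 1))"
    by (intro image_closure_subset closure_subset closed_closure) (rule continuous_on_subset, auto)
  fix q :: "'a \<times> complex"
  assume "q \<in> B \<times> sphere 0 1"
  then obtain y u where q: "q = (y, u)" "y \<in> B" "norm u = 1"
    by auto
  have "(y, u / w) \<in> closure (forward_orbit F (x0, 1))"
    using dense q \<open>norm w = 1\<close> by (auto simp: F_def norm_divide)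
  moreover have "q = h (y, u / w)"
    using q \<open>norm w = 1\<close> by (auto simp: h_def)
  ultimately show "q \<in> closure (forward_orbit (map_prod f (circle_rotation a)) (x0, w))"
    using closure_h orbit_w by (auto simp: F_def)
qed

lemma minimal_system_map_prod_circle_rotation:
  fixes f :: "'a::metric_space \<Rightarrow> 'a"
  assumes "minimal_system B f" "x0 \<in> B"
    and dense: "B \<times> sphere 0 1 \<subseteq> closure (forward_orbit (map_prod f (circle_rotation a)) (x0, 1))"
  shows "minimal_system (B \<times> sphere 0 1) (map_prod f (circle_rotation a))"
  unfolding minimal_system_def
proof (intro conjI ballI)
  let ?F = "map_prod f (circle_rotation a)"
  have contf: "continuous_on B f" and fB: "f ` B \<subseteq> B"
    using assms(1) by (auto simp: minimal_system_def)
  have "continuous_on (B \<times> sphere 0 1) (\<lambda>p. (f (fst p), cis (2 * pi * a) * snd p))"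
    by (intro continuous_intros continuous_on_compose2[OF contf]) auto
  moreover have "?F = (\<lambda>p. (f (fst p), cis (2 * pi * a) * snd p))"
    by (auto simp: circle_rotation_def fun_eq_iff)
  ultimately show contF: "continuous_on (B \<times> sphere 0 1) ?F"
    by simp
  show mapsF: "?F ` (B \<times> sphere 0 1) \<subseteq> B \<times> sphere 0 1"
    using fB by (auto simp: circle_rotation_def norm_mult)
  fix p :: "'a \<times> complex"
  assume p: "p \<in> B \<times> sphere 0 1"
  have "x0 \<in> closure (forward_orbit f (fst p))"
    using assms(1,2) p unfolding minimal_system_def by (metis mem_Times_iff subsetD)
  then have "x0 \<in> closure (fst ` forward_orbit ?F p)"
    by (simp add: forward_orbit_map_prod_fst)
  moreover have "snd ` forward_orbit ?F p \<subseteq> sphere 0 1"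
    using forward_orbit_subset[OF mapsF p] by auto
  ultimately obtain w where w: "w \<in> sphere 0 1" "(x0, w) \<in> closure (forward_orbit ?F p)"
    using closure_fst_image_compact_fibre[OF compact_sphere] by blast
  have "(x0, w) \<in> B \<times> sphere 0 1"
    using assms(2) w(1) by simp
  then have "forward_orbit ?F (x0, w) \<subseteq> closure (forward_orbit ?F p)"
    using forward_orbit_subset_closure_forward_orbit[OF contF mapsF p _ w(2)] by blast
  then have "closure (forward_orbit ?F (x0, w)) \<subseteq> closure (forward_orbit ?F p)"
    by (rule closure_minimal) simp
  moreover have "B \<times> sphere 0 1 \<subseteq> closure (forward_orbit ?F (x0, w))"
    by (rule dense_orbit_rotate[OF dense]) (use w(1) in simp)
  ultimately show "B \<times> sphere 0 1 \<subseteq> closure (forward_orbit ?F p)"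
    by blast
qed

theorem proposition1:
  fixes B :: "'a::metric_space set" and f :: "'a \<Rightarrow> 'a"
  assumes "minimal_system B f"
  shows "\<exists>a::real. a \<notin> \<rat> \<and>
    minimal_system (B \<times> sphere (0::complex) 1)
      (\<lambda>(x, z). (f x, circle_rotation a z))"
proof (cases "B = {}")
  case True
  obtain a :: real where "a \<notin> \<rat>"
    using Baire_real_avoiding_countable[of "{}" \<rat>] countable_rat by auto
  then show ?thesis
    using True by (auto simp: minimal_system_def)
next
  case False
  then obtain x0 where "x0 \<in> B"
    by blast
  then obtain a where "a \<notin> \<rat>"
    and "B \<times> sphere 0 1 \<subseteq> closure (forward_orbit (map_prod f (circle_rotation a)) (x0, 1))"
    using exists_irrational_rotation_with_dense_orbit assms by blast
  then show ?thesis
    using minimal_system_map_prod_circle_rotation[OF assms \<open>x0 \<in> B\<close>] by (auto simp: map_prod_def)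
qed

end
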